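(* Let $k$ be a field of characteristic $\neq 2$, and let $W^+=A\wr T^+$ be as described in the context. Then $W^+$ has the presentation with generators $a_1,\dots,a_m,t_1,\dots,t_n,u_1,\dots,u_n$ subject to the finitely many relations $[a_k,t_{j_1},t_{j_2},\dots,t_{j_s},a_l]=0$ for all $k,l\in\{1,\dots,m\}$, $s\ge 0$ and $1\le j_1<j_2<\dots<j_s\le n$ (for $s=0$ this reads $[a_k,a_l]=0$); $[t_i,t_j]=[t_i,u_j]=[u_i,u_j]=0$ for $1\le i,j\le n$; $[a_k,u_l]=[a_k,t_l,t_l]$ for $1\le k\le m$, $1\le l\le n$.
   Context: Left-normed brackets: $[y_1,\dots,y_n]=[[y_1,\dots,y_{n-1}],y_n]$. Let $A$ be an abelian Lie algebra with basis $a_1,\dots,a_m$ and $T$ an abelian Lie algebra with basis $t_1,\dots,t_n$. Let $U=k[t_1,\dots,t_n]$ (the universal enveloping algebra of $T$), regarded as an abelian Lie algebra under $[u,v]=uv-vu$. Let $u_i=t_i^2\in U$ and let $T^+\subset U$ be the $2n$-dimensional abelian Lie subalgebra spanned by $t_1,\dots,t_n,u_1,\dots,u_n$. Let $B$ be the free right $U$-module with basis $a_1,\dots,a_m$, which is a right Lie module for $T^+$ via $T^+\subset U$. Then $W^+=A\wr T^+$ is $B\oplus T^+$ as a vector space with bracket $[b_1+s_1,b_2+s_2]=(b_1s_2-b_2s_1)+[s_1,s_2]$ for $b_i\in B$, $s_i\in T^+$ (so $[s_1,s_2]=0$). In particular $[a_k,u_l]=a_kt_l^2$. *)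

theory Defs
  imports Main "HOL-Library.Poly_Mapping"
begin

record ('k, 'a) lie_alg =
  lcar  :: "'a set"
  ladd  :: "'a \<Rightarrow> 'a \<Rightarrow> 'a"
  lzero :: "'a"
  lsmul :: "'k \<Rightarrow> 'a \<Rightarrow> 'a"
  lbr   :: "'a \<Rightarrow> 'a \<Rightarrow> 'a"

definition is_lie_alg :: "('k::field, 'a) lie_alg \<Rightarrow> bool" where
  "is_lie_alg L \<longleftrightarrow>
     lzero L \<in> lcar L \<and>
     (\<forall>x\<in>lcar L. \<forall>y\<in>lcar L. ladd L x y \<in> lcar L \<and> lbr L x y \<in> lcar L) \<and>
     (\<forall>c. \<forall>x\<in>lcar L. lsmul L c x \<in> lcar L) \<and>
     (\<forall>x\<in>lcar L. \<forall>y\<in>lcar L. \<forall>z\<in>lcar L. ladd L (ladd L x y) z = ladd L x (ladd L y z)) \<and>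
     (\<forall>x\<in>lcar L. \<forall>y\<in>lcar L. ladd L x y = ladd L y x) \<and>
     (\<forall>x\<in>lcar L. ladd L (lzero L) x = x) \<and>
     (\<forall>x\<in>lcar L. \<exists>y\<in>lcar L. ladd L x y = lzero L) \<and>
     (\<forall>c. \<forall>x\<in>lcar L. \<forall>y\<in>lcar L. lsmul L c (ladd L x y) = ladd L (lsmul L c x) (lsmul L c y)) \<and>
     (\<forall>c d. \<forall>x\<in>lcar L. lsmul L (c + d) x = ladd L (lsmul L c x) (lsmul L d x)) \<and>
     (\<forall>c d. \<forall>x\<in>lcar L. lsmul L (c * d) x = lsmul L c (lsmul L d x)) \<and>
     (\<forall>x\<in>lcar L. lsmul L 1 x = x) \<and>
     (\<forall>x\<in>lcar L. \<forall>y\<in>lcar L. \<forall>z\<in>lcar L. lbr L (ladd L x y) z = ladd L (lbr L x z) (lbr L y z)) \<and>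
     (\<forall>x\<in>lcar L. \<forall>y\<in>lcar L. \<forall>z\<in>lcar L. lbr L x (ladd L y z) = ladd L (lbr L x y) (lbr L x z)) \<and>
     (\<forall>c. \<forall>x\<in>lcar L. \<forall>y\<in>lcar L. lbr L (lsmul L c x) y = lsmul L c (lbr L x y)) \<and>
     (\<forall>c. \<forall>x\<in>lcar L. \<forall>y\<in>lcar L. lbr L x (lsmul L c y) = lsmul L c (lbr L x y)) \<and>
     (\<forall>x\<in>lcar L. lbr L x x = lzero L) \<and>
     (\<forall>x\<in>lcar L. \<forall>y\<in>lcar L. \<forall>z\<in>lcar L.
        ladd L (lbr L (lbr L x y) z) (ladd L (lbr L (lbr L y z) x) (lbr L (lbr L z x) y)) = lzero L)"

definition lie_hom :: "('k, 'a) lie_alg \<Rightarrow> ('k, 'b) lie_alg \<Rightarrow> ('a \<Rightarrow> 'b) \<Rightarrow> bool" where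
  "lie_hom L M f \<longleftrightarrow>
     (\<forall>x\<in>lcar L. f x \<in> lcar M) \<and>
     (\<forall>x\<in>lcar L. \<forall>y\<in>lcar L. f (ladd L x y) = ladd M (f x) (f y)) \<and>
     (\<forall>c. \<forall>x\<in>lcar L. f (lsmul L c x) = lsmul M c (f x)) \<and>
     (\<forall>x\<in>lcar L. \<forall>y\<in>lcar L. f (lbr L x y) = lbr M (f x) (f y))"

inductive_set lie_span :: "('k, 'a) lie_alg \<Rightarrow> 'a set \<Rightarrow> 'a set"
  for L :: "('k, 'a) lie_alg" and X :: "'a set" where
  gen:  "x \<in> X \<Longrightarrow> x \<in> lie_span L X"
| zero: "lzero L \<in> lie_span L X"
| add:  "x \<in> lie_span L X \<Longrightarrow> y \<in> lie_span L X \<Longrightarrow> ladd L x y \<in> lie_span L X"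
| smul: "x \<in> lie_span L X \<Longrightarrow> lsmul L c x \<in> lie_span L X"
| br:   "x \<in> lie_span L X \<Longrightarrow> y \<in> lie_span L X \<Longrightarrow> lbr L x y \<in> lie_span L X"

datatype 'x lterm = LGen 'x | LZero | LBr "'x lterm" "'x lterm"

primrec leval :: "('k, 'a) lie_alg \<Rightarrow> ('x \<Rightarrow> 'a) \<Rightarrow> 'x lterm \<Rightarrow> 'a" where
  "leval L g (LGen x) = g x"
| "leval L g LZero = lzero L"
| "leval L g (LBr p q) = lbr L (leval L g p) (leval L g q)"

definition lnormed :: "'x lterm \<Rightarrow> 'x lterm list \<Rightarrow> 'x lterm" where
  "lnormed y zs = foldl LBr y zs"

text \<open>The Lie algebra W has the presentation with generators X (mapped to W by g)
  and relations R: W is a Lie algebra, g maps X into W, the relations hold in W,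
  the g-images generate W, and for every Lie algebra L (on any carrier type 'b)
  and every assignment h of the generators satisfying the relations there is a
  Lie homomorphism W \<rightarrow> L extending h.  (Uniqueness follows from generation.)
  This is equivalent to the canonical map from the free Lie algebra on X modulo
  the ideal generated by R to W being an isomorphism.\<close>
definition lie_presentation ::
  "('k::field, 'a) lie_alg \<Rightarrow> 'x set \<Rightarrow> ('x \<Rightarrow> 'a) \<Rightarrow> ('x lterm \<times> 'x lterm) set \<Rightarrow> 'b itself \<Rightarrow> bool" where
  "lie_presentation W X g R (_ :: 'b itself) \<longleftrightarrow>
     is_lie_alg W \<and> g ` X \<subseteq> lcar W \<and>
     (\<forall>(p, q)\<in>R. leval W g p = leval W g q) \<and>
     lie_span W (g ` X) = lcar W \<and>
     (\<forall>(L :: ('k, 'b) lie_alg) h. is_lie_alg L \<and> h ` X \<subseteq> lcar L \<and>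
        (\<forall>(p, q)\<in>R. leval L h p = leval L h q) \<longrightarrow>
        (\<exists>f. lie_hom W L f \<and> (\<forall>x\<in>X. f (g x) = h x)))"

type_synonym 'k mpoly = "(nat \<Rightarrow>\<^sub>0 nat) \<Rightarrow>\<^sub>0 'k"

text \<open>U = k[t_1,...,t_n]: polynomials whose monomials only involve variables 1..n\<close>
definition U_car :: "nat \<Rightarrow> 'k::field mpoly set" where
  "U_car n = {p :: 'k mpoly. \<forall>mon\<in>Poly_Mapping.keys p. Poly_Mapping.keys mon \<subseteq> {1..n}}"

definition pconst :: "'k::field \<Rightarrow> 'k mpoly" where
  "pconst c = Poly_Mapping.single 0 c"

definition pvar :: "nat \<Rightarrow> 'k::field mpoly" where
  "pvar i = Poly_Mapping.single (Poly_Mapping.single i 1) 1"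

text \<open>T+ = span of t_i, u_i = t_i^2 (i = 1..n) inside U\<close>
definition Tplus_car :: "nat \<Rightarrow> 'k::field mpoly set" where
  "Tplus_car n = {p. \<exists>c d. p = (\<Sum>i\<in>{1..n}. pconst (c i) * pvar i + pconst (d i) * pvar i ^ 2)}"

text \<open>B = free right U-module with basis a_1..a_m, as coordinate functions\<close>
definition B_car :: "nat \<Rightarrow> nat \<Rightarrow> (nat \<Rightarrow> 'k::field mpoly) set" where
  "B_car m n = {b. (\<forall>j. b j \<in> U_car n) \<and> (\<forall>j. j \<notin> {1..m} \<longrightarrow> b j = 0)}"

definition Wplus :: "nat \<Rightarrow> nat \<Rightarrow> ('k::field, (nat \<Rightarrow> 'k mpoly) \<times> 'k mpoly) lie_alg" where
  "Wplus m n =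
     \<lparr> lcar = {(b, s). b \<in> B_car m n \<and> s \<in> Tplus_car n},
       ladd = (\<lambda>(b1, s1) (b2, s2). (\<lambda>j. b1 j + b2 j, s1 + s2)),
       lzero = (\<lambda>_. 0, 0),
       lsmul = (\<lambda>c (b, s). (\<lambda>j. pconst c * b j, pconst c * s)),
       lbr = (\<lambda>(b1, s1) (b2, s2). (\<lambda>j. b1 j * s2 - b2 j * s1, s1 * s2 - s2 * s1)) \<rparr>"

datatype gen = GA nat | GT nat | GU nat

definition W_gen :: "gen \<Rightarrow> (nat \<Rightarrow> 'k::field mpoly) \<times> 'k mpoly" where
  "W_gen x = (case x of
       GA k \<Rightarrow> (\<lambda>j. if j = k then 1 else 0, 0)
     | GT i \<Rightarrow> (\<lambda>_. 0, pvar i)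
     | GU i \<Rightarrow> (\<lambda>_. 0, pvar i ^ 2))"

definition gens :: "nat \<Rightarrow> nat \<Rightarrow> gen set" where
  "gens m n = GA ` {1..m} \<union> GT ` {1..n} \<union> GU ` {1..n}"

definition rels :: "nat \<Rightarrow> nat \<Rightarrow> (gen lterm \<times> gen lterm) set" where
  "rels m n =
     {(LBr (lnormed (LGen (GA k)) (map (\<lambda>j. LGen (GT j)) js)) (LGen (GA l)), LZero) | k l js.
        k \<in> {1..m} \<and> l \<in> {1..m} \<and> sorted_wrt (<) js \<and> set js \<subseteq> {1..n}}
   \<union> {(LBr (LGen (GT i)) (LGen (GT j)), LZero) | i j. i \<in> {1..n} \<and> j \<in> {1..n}}
   \<union> {(LBr (LGen (GT i)) (LGen (GU j)), LZero) | i j. i \<in> {1..n} \<and> j \<in> {1..n}}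
   \<union> {(LBr (LGen (GU i)) (LGen (GU j)), LZero) | i j. i \<in> {1..n} \<and> j \<in> {1..n}}
   \<union> {(LBr (LGen (GA k)) (LGen (GU l)), LBr (LBr (LGen (GA k)) (LGen (GT l))) (LGen (GT l))) | k l.
        k \<in> {1..m} \<and> l \<in> {1..n}}"

end

theory Submission
  imports Defs "HOL-Algebra.FiniteProduct"
begin

text \<open>
  Let L be a Lie algebra with elements A_k, T_i, U_i satisfying the relations. Write E_k(\<alpha>) for the
  iterated bracket of A_k with \<alpha>_i copies of each T_i; since the T_i commute, the operators ad T_i
  commute, so [E_k(\<alpha>), T_i] = E_k(\<alpha> + e_i), and the relation [a_k, u_i] = [a_k, t_i, t_i] gives
  [E_k(\<alpha>), U_i] = E_k(\<alpha> + 2e_i). The heart of the proof is that all brackets [E_k(\<alpha>), E_l(\<beta>)]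
  vanish, by induction on |\<alpha>| + |\<beta>|: Jacobi moves a factor t_i across a vanishing bracket of
  lower degree at the cost of a sign. If some variable occurs twice in \<alpha> + \<beta>, moving t_i twice and
  moving u_i once yield X = -X for the bracket X, so X = 0 as the characteristic is not 2. Otherwise
  all factors can be moved to the left, leaving a defining relation [a_k, t_j1, ..., t_js, a_l] = 0.
  Hence a_k p \<mapsto> \<Sum> p_\<alpha> E_k(\<alpha>), t_i \<mapsto> T_i, u_i \<mapsto> U_i defines a Lie homomorphism on W+, and W+ is
  generated by the a_k, t_i, u_i because a_k t^\<alpha> is an iterated bracket of generators.
\<close>

section \<open>Monomials\<close>

abbreviation lookup where "lookup \<equiv> Poly_Mapping.lookup"
abbreviation keys where "keys \<equiv> Poly_Mapping.keys"
abbreviation single where "single \<equiv> Poly_Mapping.single"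

lemma single_eq_single_iff:
  "single i a = single j b \<longleftrightarrow> (i = j \<and> a = b) \<or> (a = 0 \<and> b = 0)"
  by (metis lookup_single_eq lookup_single_not_eq single_zero)

lemma poly_mapping_single_induct [case_names zero add_single]:
  assumes "P 0"
    and "\<And>p a c. P p \<Longrightarrow> a \<notin> keys p \<Longrightarrow> c \<noteq> 0 \<Longrightarrow> P (single a c + p)"
  shows "P (p :: 'a \<Rightarrow>\<^sub>0 'b::comm_monoid_add)"
proof (induction p rule: update_induct)
  case const
  then show ?case using assms(1) .
next
  case (update f a b)
  moreover have "Poly_Mapping.update a b f = single a b + f"
    using update.hyps(1)
    by (intro poly_mapping_eqI) (auto simp: lookup_update lookup_add lookup_single in_keys_iff when_def)
  ultimately show ?case using assms(2) by metis
qed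

lemma monomial_induct [case_names zero add_var]:
  assumes "P 0" and "\<And>mo i. P mo \<Longrightarrow> P (mo + single i (1::nat))"
  shows "P mo"
proof (induction mo rule: poly_mapping_single_induct)
  case zero
  then show ?case using assms(1) .
next
  case (add_single p a c)
  have "P (single a k + p)" for k
  proof (induction k)
    case 0
    then show ?case using add_single by simp
  next
    case (Suc k)
    have "single a (Suc k) + p = (single a k + p) + single a 1"
      by (simp add: single_add[symmetric] add.commute add.left_commute)
    then show ?case using assms(2) Suc by metis
  qed
  then show ?case .
qed

definition mdeg :: "nat \<Rightarrow> (nat \<Rightarrow>\<^sub>0 nat) \<Rightarrow> nat" where
  "mdeg n mo = (\<Sum>j\<in>{1..n}. lookup mo j)"

lemma mdeg_add_single: "i \<in> {1..n} \<Longrightarrow> mdeg n (mo + single i p) = mdeg n mo + p"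
  by (simp add: mdeg_def lookup_add lookup_single when_def sum.distrib)

lemma mdeg_eq_0_iff: "mdeg n mo = 0 \<longleftrightarrow> (\<forall>j\<in>{1..n}. lookup mo j = 0)"
  by (simp add: mdeg_def)

lemma monomial_split_single:
  fixes mo :: "'a \<Rightarrow>\<^sub>0 nat"
  assumes "c \<le> lookup mo i"
  obtains mo' where "mo = mo' + single i c"
proof
  show "mo = (mo - single i c) + single i c"
    using assms by (intro poly_mapping_eqI) (auto simp: lookup_add lookup_minus lookup_single when_def)
qed

section \<open>Lie algebras on a carrier set\<close>

lemma lie_span_subset:
  assumes "is_lie_alg L" and "X \<subseteq> lcar L"
  shows "lie_span L X \<subseteq> lcar L"
proof
  fix x assume "x \<in> lie_span L X"
  then show "x \<in> lcar L"
  proof induction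
    case (gen x)
    then show ?case using assms(2) by blast
  qed (use assms(1) in \<open>simp_all add: is_lie_alg_def\<close>)
qed

lemma leval_lnormed:
  "leval L g (lnormed y zs) = foldl (\<lambda>x z. lbr L x (leval L g z)) (leval L g y) zs"
  unfolding lnormed_def by (induction zs arbitrary: y) auto

locale lie_algebra =
  fixes L :: "('k::field, 'b) lie_alg"
  assumes zero_closed [simp]: "lzero L \<in> lcar L"
    and add_closed [simp]: "x \<in> lcar L \<Longrightarrow> y \<in> lcar L \<Longrightarrow> ladd L x y \<in> lcar L"
    and br_closed [simp]: "x \<in> lcar L \<Longrightarrow> y \<in> lcar L \<Longrightarrow> lbr L x y \<in> lcar L"
    and smult_closed [simp]: "x \<in> lcar L \<Longrightarrow> lsmul L c x \<in> lcar L"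
    and add_assoc: "x \<in> lcar L \<Longrightarrow> y \<in> lcar L \<Longrightarrow> z \<in> lcar L \<Longrightarrow>
      ladd L (ladd L x y) z = ladd L x (ladd L y z)"
    and add_commute: "x \<in> lcar L \<Longrightarrow> y \<in> lcar L \<Longrightarrow> ladd L x y = ladd L y x"
    and zero_add [simp]: "x \<in> lcar L \<Longrightarrow> ladd L (lzero L) x = x"
    and exists_add_inverse: "x \<in> lcar L \<Longrightarrow> \<exists>y\<in>lcar L. ladd L x y = lzero L"
    and smult_add_right: "x \<in> lcar L \<Longrightarrow> y \<in> lcar L \<Longrightarrow>
      lsmul L c (ladd L x y) = ladd L (lsmul L c x) (lsmul L c y)"
    and smult_add_left: "x \<in> lcar L \<Longrightarrow> lsmul L (c + d) x = ladd L (lsmul L c x) (lsmul L d x)"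
    and mult_smult: "x \<in> lcar L \<Longrightarrow> lsmul L (c * d) x = lsmul L c (lsmul L d x)"
    and one_smult [simp]: "x \<in> lcar L \<Longrightarrow> lsmul L 1 x = x"
    and br_add_left: "x \<in> lcar L \<Longrightarrow> y \<in> lcar L \<Longrightarrow> z \<in> lcar L \<Longrightarrow>
      lbr L (ladd L x y) z = ladd L (lbr L x z) (lbr L y z)"
    and br_add_right: "x \<in> lcar L \<Longrightarrow> y \<in> lcar L \<Longrightarrow> z \<in> lcar L \<Longrightarrow>
      lbr L x (ladd L y z) = ladd L (lbr L x y) (lbr L x z)"
    and br_smult_left: "x \<in> lcar L \<Longrightarrow> y \<in> lcar L \<Longrightarrow> lbr L (lsmul L c x) y = lsmul L c (lbr L x y)"
    and br_smult_right: "x \<in> lcar L \<Longrightarrow> y \<in> lcar L \<Longrightarrow> lbr L x (lsmul L c y) = lsmul L c (lbr L x y)"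
    and br_self [simp]: "x \<in> lcar L \<Longrightarrow> lbr L x x = lzero L"
    and jacobi: "x \<in> lcar L \<Longrightarrow> y \<in> lcar L \<Longrightarrow> z \<in> lcar L \<Longrightarrow>
      ladd L (lbr L (lbr L x y) z) (ladd L (lbr L (lbr L y z) x) (lbr L (lbr L z x) y)) = lzero L"

lemma lie_algebraI:
  assumes "is_lie_alg L"
  shows "lie_algebra L"
  using assms unfolding is_lie_alg_def by (elim conjE) (rule lie_algebra.intro; meson)

context lie_algebra
begin

abbreviation car where "car \<equiv> lcar L"
abbreviation add (infixl "\<boxplus>" 65) where "x \<boxplus> y \<equiv> ladd L x y"
abbreviation smult (infixr "\<star>" 75) where "c \<star> x \<equiv> lsmul L c x"
abbreviation br where "br x y \<equiv> lbr L x y"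
abbreviation zero where "zero \<equiv> lzero L"

lemma add_left_commute: "x \<in> car \<Longrightarrow> y \<in> car \<Longrightarrow> z \<in> car \<Longrightarrow> x \<boxplus> (y \<boxplus> z) = y \<boxplus> (x \<boxplus> z)"
  by (metis add_assoc add_commute)

lemmas add_ac = add_assoc add_commute add_left_commute

lemma smult_smult [simp]: "x \<in> car \<Longrightarrow> c \<star> (d \<star> x) = (c * d) \<star> x"
  by (simp add: mult_smult)

lemma add_zero [simp]: "x \<in> car \<Longrightarrow> x \<boxplus> zero = x"
  using add_commute[of x zero] by simp

lemma add_left_cancel:
  assumes "x \<in> car" "y \<in> car" "z \<in> car" and "x \<boxplus> y = x \<boxplus> z"
  shows "y = z"
proof -
  obtain w where w: "w \<in> car" "x \<boxplus> w = zero" using exists_add_inverse assms(1) by blast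
  have "y = (w \<boxplus> x) \<boxplus> y" using w assms by (simp add: add_commute)
  also have "\<dots> = w \<boxplus> (x \<boxplus> z)" using w assms by (simp add: add_assoc)
  also have "\<dots> = z" using w assms by (simp add: add_assoc[symmetric] add_commute)
  finally show ?thesis .
qed

lemma zero_smult [simp]: "x \<in> car \<Longrightarrow> 0 \<star> x = zero"
  using smult_add_left[of x 0 0] add_left_cancel[of "0 \<star> x" "0 \<star> x" zero] by simp

lemma smult_zero [simp]: "c \<star> zero = zero"
  using smult_add_right[of zero zero c] add_left_cancel[of "c \<star> zero" "c \<star> zero" zero] by simp

lemma minus_add_self [simp]: "x \<in> car \<Longrightarrow> (-1) \<star> x \<boxplus> x = zero"
  using smult_add_left[of x "-1" 1] by simp

lemma add_minus_self [simp]: "x \<in> car \<Longrightarrow> x \<boxplus> (-1) \<star> x = zero"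
  using minus_add_self add_commute by simp

lemma eq_minus_if_add_eq_zero:
  assumes "x \<in> car" "y \<in> car" and "x \<boxplus> y = zero"
  shows "x = (-1) \<star> y"
proof -
  have "x = x \<boxplus> (y \<boxplus> (-1) \<star> y)" using assms by simp
  also have "\<dots> = (x \<boxplus> y) \<boxplus> (-1) \<star> y" using assms(1,2) by (simp add: add_assoc)
  also have "\<dots> = (-1) \<star> y" using assms by simp
  finally show ?thesis .
qed

lemma eq_zero_if_minus_eq_zero:
  assumes "x \<in> car" and "(-1) \<star> x = zero"
  shows "x = zero"
  using assms smult_smult[of x "-1" "-1"] by simp

lemma eq_zero_if_eq_minus:
  assumes "(2::'k) \<noteq> 0" and "x \<in> car" and "x = (-1) \<star> x"
  shows "x = zero"
proof -
  have "2 \<star> x = 1 \<star> x \<boxplus> 1 \<star> x"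
    using smult_add_left[OF assms(2), of 1 1] by simp
  also have "\<dots> = zero" using assms(2,3) add_minus_self[OF assms(2)] by simp
  finally have "inverse 2 \<star> (2 \<star> x) = zero" by simp
  then show ?thesis using assms(1,2) by simp
qed

lemma br_zero_left [simp]: "y \<in> car \<Longrightarrow> br zero y = zero"
  using br_smult_left[of zero y 0] by simp

lemma br_zero_right [simp]: "x \<in> car \<Longrightarrow> br x zero = zero"
  using br_smult_right[of x zero 0] by simp

lemma br_antisym:
  assumes "x \<in> car" "y \<in> car"
  shows "br y x = (-1) \<star> br x y"
proof -
  have "br (x \<boxplus> y) (x \<boxplus> y) = br x (x \<boxplus> y) \<boxplus> br y (x \<boxplus> y)"
    using assms by (simp add: br_add_left del: br_self)
  also have "\<dots> = (br x x \<boxplus> br x y) \<boxplus> (br y x \<boxplus> br y y)"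
    using assms by (simp add: br_add_right del: br_self)
  finally have "br y x \<boxplus> br x y = zero"
    using assms by (simp add: add_commute)
  then show ?thesis
    using eq_minus_if_add_eq_zero[of "br y x" "br x y"] assms by simp
qed

lemma br_br_derivation:
  assumes "x \<in> car" "y \<in> car" "t \<in> car"
  shows "br (br x y) t = br (br x t) y \<boxplus> br x (br y t)"
proof -
  have "br (br y t) x = (-1) \<star> br x (br y t)" "br (br t x) y = (-1) \<star> br (br x t) y"
    using br_antisym[of x "br y t"] br_antisym[of x t] assms by (simp_all add: br_smult_left)
  then have "br (br x y) t \<boxplus> (-1) \<star> (br (br x t) y \<boxplus> br x (br y t)) = zero"
    using jacobi[of x y t] assms by (simp add: smult_add_right add_commute)
  from eq_minus_if_add_eq_zero[OF _ _ this] show ?thesis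
    using assms by simp
qed

definition additive_monoid :: "'b monoid" where
  "additive_monoid = \<lparr>carrier = car, mult = ladd L, one = zero\<rparr>"

lemma comm_monoid_additive_monoid: "comm_monoid additive_monoid"
  unfolding additive_monoid_def by (rule comm_monoidI) (auto simp: add_ac)

definition lsum :: "('c \<Rightarrow> 'b) \<Rightarrow> 'c set \<Rightarrow> 'b" where
  "lsum f A = finprod additive_monoid f A"

lemma lsum_empty [simp]: "lsum f {} = zero"
  using comm_monoid.finprod_empty[OF comm_monoid_additive_monoid]
  by (simp add: lsum_def additive_monoid_def)

lemma lsum_infinite: "infinite A \<Longrightarrow> lsum f A = zero"
  using comm_monoid.finprod_infinite[OF comm_monoid_additive_monoid]
  by (simp add: lsum_def additive_monoid_def)

lemma lsum_insert:
  "finite A \<Longrightarrow> a \<notin> A \<Longrightarrow> (\<And>x. x \<in> insert a A \<Longrightarrow> f x \<in> car) \<Longrightarrow>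
    lsum f (insert a A) = f a \<boxplus> lsum f A"
  using comm_monoid.finprod_insert[OF comm_monoid_additive_monoid, of A a f]
  by (auto simp: lsum_def additive_monoid_def Pi_def)

lemma lsum_closed [simp]: "(\<And>x. x \<in> A \<Longrightarrow> f x \<in> car) \<Longrightarrow> lsum f A \<in> car"
  using comm_monoid.finprod_closed[OF comm_monoid_additive_monoid, of f A]
  by (auto simp: lsum_def additive_monoid_def Pi_def)

lemma lsum_zero: "(\<And>x. x \<in> A \<Longrightarrow> f x = zero) \<Longrightarrow> lsum f A = zero"
  using comm_monoid.finprod_one_eqI[OF comm_monoid_additive_monoid, of A f]
  by (auto simp: lsum_def additive_monoid_def)

lemma lsum_add:
  "(\<And>x. x \<in> A \<Longrightarrow> f x \<in> car) \<Longrightarrow> (\<And>x. x \<in> A \<Longrightarrow> g x \<in> car) \<Longrightarrow>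
    lsum (\<lambda>x. f x \<boxplus> g x) A = lsum f A \<boxplus> lsum g A"
  using comm_monoid.finprod_multf[OF comm_monoid_additive_monoid, of f A g]
  by (auto simp: lsum_def additive_monoid_def Pi_def)

lemma lsum_cong:
  "A = B \<Longrightarrow> (\<And>x. x \<in> B \<Longrightarrow> g x \<in> car) \<Longrightarrow> (\<And>x. x \<in> B \<Longrightarrow> f x = g x) \<Longrightarrow>
    lsum f A = lsum g B"
  using comm_monoid.finprod_cong'[OF comm_monoid_additive_monoid, of A B g f]
  by (auto simp: lsum_def additive_monoid_def Pi_def)

lemma lsum_mono_neutral:
  "finite B \<Longrightarrow> A \<subseteq> B \<Longrightarrow> (\<And>x. x \<in> B - A \<Longrightarrow> f x = zero) \<Longrightarrow>
    (\<And>x. x \<in> B \<Longrightarrow> f x \<in> car) \<Longrightarrow> lsum f A = lsum f B"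
  using comm_monoid.finprod_mono_neutral_cong_left[OF comm_monoid_additive_monoid, of B A f f]
  by (auto simp: lsum_def additive_monoid_def Pi_def)

lemma lsum_eq_single:
  assumes "finite A" "i \<in> A" and "\<And>x. x \<in> A \<Longrightarrow> x \<noteq> i \<Longrightarrow> f x = zero" and "f i \<in> car"
  shows "lsum f A = f i"
proof -
  have "lsum f {i} = lsum f A"
    using assms by (intro lsum_mono_neutral) (auto, metis zero_closed)
  then show ?thesis using lsum_insert[of "{}" i f] assms(4) by simp
qed

lemma lsum_additive:
  assumes "\<And>x y. x \<in> car \<Longrightarrow> y \<in> car \<Longrightarrow> \<phi> (x \<boxplus> y) = \<phi> x \<boxplus> \<phi> y"
    and "\<And>x. x \<in> car \<Longrightarrow> \<phi> x \<in> car" and "\<phi> zero = zero"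
    and "\<And>x. x \<in> A \<Longrightarrow> f x \<in> car"
  shows "\<phi> (lsum f A) = lsum (\<lambda>x. \<phi> (f x)) A"
  using assms(4)
proof (induction A rule: infinite_finite_induct)
  case (infinite A)
  then show ?case using assms(3) by (simp add: lsum_infinite)
next
  case empty
  then show ?case using assms(3) by simp
next
  case (insert a A)
  have "lsum f (insert a A) = f a \<boxplus> lsum f A"
    by (rule lsum_insert) (use insert in auto)
  moreover have "lsum (\<lambda>x. \<phi> (f x)) (insert a A) = \<phi> (f a) \<boxplus> lsum (\<lambda>x. \<phi> (f x)) A"
    by (rule lsum_insert) (use insert assms(2) in auto)
  ultimately show ?case using insert assms(1) by simp
qed

lemma smult_lsum: "(\<And>x. x \<in> A \<Longrightarrow> f x \<in> car) \<Longrightarrow> c \<star> lsum f A = lsum (\<lambda>x. c \<star> f x) A"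
  by (rule lsum_additive) (simp_all add: smult_add_right)

lemma br_lsum_left:
  "(\<And>x. x \<in> A \<Longrightarrow> f x \<in> car) \<Longrightarrow> y \<in> car \<Longrightarrow> br (lsum f A) y = lsum (\<lambda>x. br (f x) y) A"
  by (rule lsum_additive[where \<phi> = "\<lambda>x. br x y"]) (simp_all add: br_add_left)

lemma br_lsum_right:
  "(\<And>x. x \<in> A \<Longrightarrow> f x \<in> car) \<Longrightarrow> y \<in> car \<Longrightarrow> br y (lsum f A) = lsum (\<lambda>x. br y (f x)) A"
  by (rule lsum_additive[where \<phi> = "\<lambda>x. br y x"]) (simp_all add: br_add_right)

end

section \<open>The Lie algebra W+\<close>

lemma pconst_add: "pconst (a + b) = (pconst a + pconst b :: 'k::field mpoly)"
  by (simp add: pconst_def single_add)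

lemma pconst_mult: "pconst (a * b) = (pconst a * pconst b :: 'k::field mpoly)"
  by (simp add: pconst_def mult_single)

lemma pconst_one [simp]: "pconst 1 = (1 :: 'k::field mpoly)"
  by (simp add: pconst_def)

lemma pconst_zero [simp]: "pconst 0 = (0 :: 'k::field mpoly)"
  by (simp add: pconst_def)

lemma pconst_minus: "pconst (- a) = (- pconst a :: 'k::field mpoly)"
  by (simp add: pconst_def single_uminus)

lemma pconst_mult_single: "pconst c * single mo d = (single mo (c * d) :: 'k::field mpoly)"
  by (simp add: pconst_def mult_single)

lemma lookup_pconst_mult: "lookup (pconst c * p) mo = c * lookup (p :: 'k::field mpoly) mo"
proof -
  have "pconst c * p = Poly_Mapping.map ((*) c) p"
    by (simp add: pconst_def mult_map_scale_conv_mult)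
  moreover have "lookup (Poly_Mapping.map ((*) c) p) mo = c * lookup p mo"
    by transfer (simp add: when_def)
  ultimately show ?thesis by simp
qed

lemma keys_pconst_mult: "keys (pconst c * p) \<subseteq> keys (p :: 'k::field mpoly)"
  by (auto simp: in_keys_iff lookup_pconst_mult)

lemma pvar_power2: "pvar i ^ 2 = (single (single i 2) 1 :: 'k::field mpoly)"
  by (simp add: pvar_def power2_eq_square mult_single single_add[symmetric] numeral_2_eq_2)

lemma U_car_zero [simp]: "0 \<in> U_car n"
  by (simp add: U_car_def)

lemma U_car_one [simp]: "1 \<in> U_car n"
  by (simp add: U_car_def)

lemma U_car_add [simp]: "p \<in> U_car n \<Longrightarrow> q \<in> U_car n \<Longrightarrow> p + q \<in> U_car n"
  unfolding U_car_def using keys_add[of p q] by blast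

lemma U_car_minus [simp]: "p \<in> U_car n \<Longrightarrow> - p \<in> U_car n"
  by (simp add: U_car_def)

lemma U_car_diff [simp]: "p \<in> U_car n \<Longrightarrow> q \<in> U_car n \<Longrightarrow> p - q \<in> U_car n"
  unfolding U_car_def using keys_diff[of p q] by blast

lemma U_car_mult [simp]:
  assumes "p \<in> U_car n" and "q \<in> U_car n"
  shows "p * q \<in> (U_car n :: 'k::field mpoly set)"
  unfolding U_car_def mem_Collect_eq
proof
  fix mo assume "mo \<in> keys (p * q)"
  then obtain a b where "mo = a + b" "a \<in> keys p" "b \<in> keys q"
    using keys_mult[of p q] by blast
  then show "keys mo \<subseteq> {1..n}"
    using assms keys_add[of a b] unfolding U_car_def by blast
qed

lemma U_car_pconst [simp]: "pconst c \<in> U_car n"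
  by (simp add: U_car_def pconst_def)

lemma U_car_pvar [simp]: "i \<in> {1..n} \<Longrightarrow> pvar i \<in> U_car n"
  by (simp add: U_car_def pvar_def)

lemma U_car_power [simp]: "p \<in> U_car n \<Longrightarrow> p ^ k \<in> U_car n"
  by (induction k) auto

lemma U_car_sum [simp]: "(\<And>i. i \<in> I \<Longrightarrow> f i \<in> U_car n) \<Longrightarrow> sum f I \<in> U_car n"
  by (induction I rule: infinite_finite_induct) auto

definition tplus :: "nat \<Rightarrow> (nat \<Rightarrow> 'k) \<Rightarrow> (nat \<Rightarrow> 'k) \<Rightarrow> 'k::field mpoly" where
  "tplus n c d = (\<Sum>i\<in>{1..n}. pconst (c i) * pvar i + pconst (d i) * pvar i ^ 2)"

lemma Tplus_car_iff: "s \<in> Tplus_car n \<longleftrightarrow> (\<exists>c d. s = tplus n c d)"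
  by (simp add: Tplus_car_def tplus_def)

lemma Tplus_car_subset_U_car: "s \<in> Tplus_car n \<Longrightarrow> s \<in> U_car n"
  unfolding Tplus_car_iff tplus_def by (auto intro!: U_car_sum)

lemma tplus_add: "tplus n c d + tplus n c' d' = tplus n (\<lambda>i. c i + c' i) (\<lambda>i. d i + d' i)"
  unfolding tplus_def sum.distrib[symmetric]
  by (rule sum.cong) (simp_all add: pconst_add distrib_right)

lemma pconst_mult_tplus: "pconst a * tplus n c d = tplus n (\<lambda>i. a * c i) (\<lambda>i. a * d i)"
  unfolding tplus_def sum_distrib_left
  by (rule sum.cong) (simp_all add: pconst_mult distrib_left mult.assoc)

lemma tplus_delta:
  assumes "i \<in> {1..n}"
  shows "tplus n (\<lambda>j. if j = i then a else 0) (\<lambda>j. if j = i then b else 0)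
    = pconst a * pvar i + pconst b * (pvar i ^ 2 :: 'k::field mpoly)"
proof -
  have "tplus n (\<lambda>j. if j = i then a else 0) (\<lambda>j. if j = i then b else 0) =
     (\<Sum>j\<in>{1..n}. if j = i then pconst a * pvar i + pconst b * (pvar i ^ 2 :: 'k mpoly) else 0)"
    unfolding tplus_def by (rule sum.cong) auto
  then show ?thesis using assms by simp
qed

lemma Tplus_car_add [simp]: "s \<in> Tplus_car n \<Longrightarrow> t \<in> Tplus_car n \<Longrightarrow> s + t \<in> Tplus_car n"
  unfolding Tplus_car_iff using tplus_add by blast

lemma Tplus_car_pconst_mult [simp]: "s \<in> Tplus_car n \<Longrightarrow> pconst a * s \<in> Tplus_car n"
  unfolding Tplus_car_iff using pconst_mult_tplus by blast

lemma Tplus_car_minus [simp]: "s \<in> Tplus_car n \<Longrightarrow> - s \<in> Tplus_car n"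
  using Tplus_car_pconst_mult[of s n "-1"] by (simp add: pconst_minus)

lemma Tplus_car_zero [simp]: "0 \<in> Tplus_car n"
  using Tplus_car_pconst_mult[of "tplus n (\<lambda>_. 0) (\<lambda>_. 0)" n 0] by (auto simp: Tplus_car_iff)

lemma Tplus_car_pvar [simp]: "i \<in> {1..n} \<Longrightarrow> (pvar i :: 'k::field mpoly) \<in> Tplus_car n"
  using tplus_delta[of i n 1 0] unfolding Tplus_car_iff
  by (metis add.right_neutral mult_1 mult_zero_left pconst_one pconst_zero)

lemma Tplus_car_pvar_power2 [simp]: "i \<in> {1..n} \<Longrightarrow> (pvar i ^ 2 :: 'k::field mpoly) \<in> Tplus_car n"
  using tplus_delta[of i n 0 1] unfolding Tplus_car_iff
  by (metis add_0 mult_1 mult_zero_left pconst_one pconst_zero)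

lemma lookup_pconst_mult_pvar:
  "lookup (pconst c * pvar j + pconst d * pvar j ^ 2) (single i 1) = (if j = i then c else 0)"
  "lookup (pconst c * pvar j + pconst d * pvar j ^ 2) (single i 2) = (if j = i then d else (0::'k::field))"
  unfolding pvar_power2
  by (auto simp: pvar_def pconst_mult_single lookup_add lookup_single when_def single_eq_single_iff)

lemma lookup_tplus:
  assumes "i \<in> {1..n}"
  shows "lookup (tplus n c d) (single i 1) = c i" and "lookup (tplus n c d) (single i 2) = d i"
  unfolding tplus_def lookup_sum lookup_pconst_mult_pvar using assms by simp_all

lemma Wplus_simps [simp]:
  "lcar (Wplus m n) = {(b, s). b \<in> B_car m n \<and> s \<in> Tplus_car n}"
  "ladd (Wplus m n) (b1, s1) (b2, s2) = (\<lambda>j. b1 j + b2 j, s1 + s2)"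
  "lzero (Wplus m n) = (\<lambda>_. 0, 0)"
  "lsmul (Wplus m n) c (b, s) = (\<lambda>j. pconst c * b j, pconst c * s)"
  "lbr (Wplus m n) (b1, s1) (b2, s2) = (\<lambda>j. b1 j * s2 - b2 j * s1, s1 * s2 - s2 * s1)"
  by (simp_all add: Wplus_def)

lemma is_lie_alg_Wplus: "is_lie_alg (Wplus m n :: ('k::field, (nat \<Rightarrow> 'k mpoly) \<times> 'k mpoly) lie_alg)"
proof -
  have neg: "\<exists>y\<in>lcar (Wplus m n). ladd (Wplus m n) x y = lzero (Wplus m n)"
    if "x \<in> lcar (Wplus m n :: ('k, (nat \<Rightarrow> 'k mpoly) \<times> 'k mpoly) lie_alg)" for x
    using that by (intro bexI[of _ "(\<lambda>j. - fst x j, - snd x)"]) (auto simp: B_car_def)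
  have "s * pconst c \<in> Tplus_car n" if "s \<in> Tplus_car n" for s :: "'k mpoly" and c
    using that Tplus_car_pconst_mult[of s n c] by (simp only: mult.commute)
  then show ?thesis
    unfolding is_lie_alg_def using neg
    by (auto simp: B_car_def Tplus_car_subset_U_car algebra_simps pconst_add pconst_mult)
qed

lemma W_gen_in_Wplus:
  "x \<in> gens m n \<Longrightarrow> (W_gen x :: (nat \<Rightarrow> 'k::field mpoly) \<times> 'k mpoly) \<in> lcar (Wplus m n)"
  by (auto simp: gens_def W_gen_def B_car_def)

lemma snd_lbr_Wplus: "snd (lbr (Wplus m n) x y) = 0"
  by (cases x, cases y) simp

lemma snd_foldl_lbr_Wplus:
  "snd x = 0 \<Longrightarrow> snd (foldl (\<lambda>x z. lbr (Wplus m n) x (f z)) x zs) = 0"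
  by (induction zs arbitrary: x) (auto simp: snd_lbr_Wplus)

lemma Wplus_satisfies_rels:
  "\<forall>(p, q)\<in>rels m n. leval (Wplus m n :: ('k::field, (nat \<Rightarrow> 'k mpoly) \<times> 'k mpoly) lie_alg) W_gen p
     = leval (Wplus m n :: ('k, (nat \<Rightarrow> 'k mpoly) \<times> 'k mpoly) lie_alg) W_gen q"
proof -
  let ?W = "Wplus m n :: ('k, (nat \<Rightarrow> 'k mpoly) \<times> 'k mpoly) lie_alg"
  have B_abelian:
    "leval ?W W_gen (LBr (lnormed (LGen (GA k)) (map (\<lambda>j. LGen (GT j)) js)) (LGen (GA l))) = lzero ?W"
    for k l js
  proof -
    let ?x = "foldl (\<lambda>x z. lbr ?W x (leval ?W W_gen z)) (W_gen (GA k)) (map (\<lambda>j. LGen (GT j)) js)"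
    have "snd ?x = 0" by (rule snd_foldl_lbr_Wplus) (simp add: W_gen_def)
    then obtain b where "?x = (b, 0)" by (metis prod.collapse)
    then show ?thesis by (simp add: leval_lnormed W_gen_def)
  qed
  have "leval ?W W_gen (LBr (LGen (GA k)) (LGen (GU l))) =
        leval ?W W_gen (LBr (LBr (LGen (GA k)) (LGen (GT l))) (LGen (GT l)))" for k l
    by (auto simp: W_gen_def power2_eq_square algebra_simps)
  with B_abelian show ?thesis
    unfolding rels_def by (auto simp: W_gen_def)
qed

definition a_elem :: "nat \<Rightarrow> 'k::field mpoly \<Rightarrow> (nat \<Rightarrow> 'k mpoly) \<times> 'k mpoly" where
  "a_elem k p = (\<lambda>j. if j = k then p else 0, 0)"

lemma a_elem_monomial_in_span:
  assumes "k \<in> {1..m}" and "keys mo \<subseteq> {1..n}"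
  shows "a_elem k (single mo (1::'k::field)) \<in> lie_span (Wplus m n) (W_gen ` gens m n)"
  using assms(2)
proof (induction mo rule: monomial_induct)
  case zero
  have "a_elem k (single 0 (1::'k)) = W_gen (GA k)"
    by (auto simp: a_elem_def W_gen_def)
  then show ?case using assms(1) by (auto simp: gens_def intro: lie_span.gen)
next
  case (add_var mo i)
  have "keys (mo + single i 1) = insert i (keys mo)"
    by (auto simp: in_keys_iff lookup_add lookup_single when_def split: if_splits)
  with add_var.prems have i: "i \<in> {1..n}" and "keys mo \<subseteq> {1..n}" by auto
  then have "a_elem k (single mo (1::'k)) \<in> lie_span (Wplus m n) (W_gen ` gens m n)"
    using add_var.IH by blast
  moreover have "W_gen (GT i) \<in> lie_span (Wplus m n) (W_gen ` gens m n)"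
    using i by (auto simp: gens_def intro: lie_span.gen)
  moreover have "a_elem k (single (mo + single i 1) (1::'k)) =
      lbr (Wplus m n) (a_elem k (single mo 1)) (W_gen (GT i))"
    by (auto simp: a_elem_def W_gen_def pvar_def mult_single)
  ultimately show ?case by (metis lie_span.br)
qed

lemma a_elem_in_span:
  assumes "k \<in> {1..m}" and "p \<in> U_car n"
  shows "a_elem k (p :: 'k::field mpoly) \<in> lie_span (Wplus m n) (W_gen ` gens m n)"
  using assms(2)
proof (induction p rule: poly_mapping_single_induct)
  case zero
  have "a_elem k 0 = lzero (Wplus m n :: ('k, (nat \<Rightarrow> 'k mpoly) \<times> 'k mpoly) lie_alg)"
    by (auto simp: a_elem_def)
  then show ?case by (metis lie_span.zero)
next
  case (add_single q mo c)
  have "keys (single mo c + q) = insert mo (keys q)"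
    using add_single.hyps by (auto simp: in_keys_iff lookup_add lookup_single when_def split: if_splits)
  with add_single.prems have "keys mo \<subseteq> {1..n}" and "q \<in> U_car n"
    unfolding U_car_def by auto
  moreover have "a_elem k (single mo c + q) =
      ladd (Wplus m n) (lsmul (Wplus m n) c (a_elem k (single mo 1))) (a_elem k q)"
    by (auto simp: a_elem_def pconst_mult_single)
  ultimately show ?case
    by (metis add_single.IH a_elem_monomial_in_span[OF assms(1)] lie_span.add lie_span.smul)
qed

lemma B_part_in_span:
  assumes "b \<in> B_car m n" and "J \<subseteq> {1..m}"
  shows "(\<lambda>k. if k \<in> J then b k else 0, 0) \<in> lie_span (Wplus m n) (W_gen ` gens m n)"
  using finite_subset[OF assms(2) finite_atLeastAtMost] assms(2)
proof (induction J rule: finite_induct)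
  case empty
  have "(\<lambda>k. if k \<in> {} then b k else 0, 0) = lzero (Wplus m n)" by auto
  then show ?case by (metis lie_span.zero)
next
  case (insert k J)
  have "(\<lambda>j. if j \<in> insert k J then b j else 0, 0) =
        ladd (Wplus m n) (a_elem k (b k)) (\<lambda>j. if j \<in> J then b j else 0, 0)"
    using insert.hyps by (auto simp: a_elem_def)
  moreover have "a_elem k (b k) \<in> lie_span (Wplus m n) (W_gen ` gens m n)"
    using insert.prems assms(1) by (intro a_elem_in_span) (auto simp: B_car_def)
  ultimately show ?case
    using insert by (simp add: lie_span.add)
qed

lemma Tplus_part_in_span:
  assumes "I \<subseteq> {1..n}"
  shows "(\<lambda>_. 0, \<Sum>i\<in>I. pconst (c i) * pvar i + pconst (d i) * pvar i ^ 2)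
    \<in> lie_span (Wplus m n :: ('k::field, (nat \<Rightarrow> 'k mpoly) \<times> 'k mpoly) lie_alg) (W_gen ` gens m n)"
  using finite_subset[OF assms finite_atLeastAtMost] assms
proof (induction I rule: finite_induct)
  case empty
  have "(\<lambda>_. 0, \<Sum>i\<in>{}. pconst (c i) * pvar i + pconst (d i) * pvar i ^ 2)
    = lzero (Wplus m n :: ('k, (nat \<Rightarrow> 'k mpoly) \<times> 'k mpoly) lie_alg)" by auto
  then show ?case by (metis lie_span.zero)
next
  case (insert i I)
  let ?W = "Wplus m n :: ('k, (nat \<Rightarrow> 'k mpoly) \<times> 'k mpoly) lie_alg"
  have "W_gen (GT i) \<in> lie_span ?W (W_gen ` gens m n)" "W_gen (GU i) \<in> lie_span ?W (W_gen ` gens m n)"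
    using insert.prems by (auto simp: gens_def intro: lie_span.gen)
  moreover have "(\<lambda>_. 0, \<Sum>i\<in>insert i I. pconst (c i) * pvar i + pconst (d i) * pvar i ^ 2) =
    ladd ?W (ladd ?W (lsmul ?W (c i) (W_gen (GT i))) (lsmul ?W (d i) (W_gen (GU i))))
       (\<lambda>_. 0, \<Sum>i\<in>I. pconst (c i) * pvar i + pconst (d i) * pvar i ^ 2)"
    using insert.hyps by (auto simp: W_gen_def)
  ultimately show ?case using insert by (auto intro: lie_span.add lie_span.smul)
qed

lemma lie_span_W_gen:
  "lie_span (Wplus m n :: ('k::field, (nat \<Rightarrow> 'k mpoly) \<times> 'k mpoly) lie_alg) (W_gen ` gens m n)
     = lcar (Wplus m n)"
proof
  let ?W = "Wplus m n :: ('k, (nat \<Rightarrow> 'k mpoly) \<times> 'k mpoly) lie_alg"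
  show "lie_span ?W (W_gen ` gens m n) \<subseteq> lcar ?W"
    using W_gen_in_Wplus by (intro lie_span_subset is_lie_alg_Wplus) blast
  show "lcar ?W \<subseteq> lie_span ?W (W_gen ` gens m n)"
  proof
    fix x assume x: "x \<in> lcar ?W"
    then obtain b s where bs: "x = (b, s)" and b: "b \<in> B_car m n" and "s \<in> Tplus_car n"
      by (cases x) auto
    have "x = ladd ?W (\<lambda>k. if k \<in> {1..m} then b k else 0, 0) (\<lambda>_. 0, s)"
      using bs b by (auto simp: B_car_def)
    moreover have "(\<lambda>k. if k \<in> {1..m} then b k else 0, 0) \<in> lie_span ?W (W_gen ` gens m n)"
      by (rule B_part_in_span[OF b]) simp
    moreover obtain c d where "s = (\<Sum>i\<in>{1..n}. pconst (c i) * pvar i + pconst (d i) * pvar i ^ 2)"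
      using \<open>s \<in> Tplus_car n\<close> unfolding Tplus_car_def by blast
    then have "(\<lambda>_. 0, s) \<in> lie_span ?W (W_gen ` gens m n)"
      by (simp add: Tplus_part_in_span)
    ultimately show "x \<in> lie_span ?W (W_gen ` gens m n)"
      by (simp only: lie_span.add)
  qed
qed

section \<open>Lie algebras satisfying the relations\<close>

locale rels_model = lie_algebra L for L :: "('k::field, 'b) lie_alg" +
  fixes m n :: nat and h :: "gen \<Rightarrow> 'b"
  assumes gens_closed: "h ` gens m n \<subseteq> lcar L"
    and rels_hold: "\<forall>(p, q)\<in>rels m n. leval L h p = leval L h q"
    and two_ne_zero: "(2::'k) \<noteq> 0"
begin

abbreviation hA where "hA k \<equiv> h (GA k)"
abbreviation hT where "hT i \<equiv> h (GT i)"
abbreviation hU where "hU i \<equiv> h (GU i)"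

lemma hA_closed [simp]: "k \<in> {1..m} \<Longrightarrow> hA k \<in> car"
  using gens_closed by (auto simp: gens_def)

lemma hT_closed [simp]: "i \<in> {1..n} \<Longrightarrow> hT i \<in> car"
  using gens_closed by (auto simp: gens_def)

lemma hU_closed [simp]: "i \<in> {1..n} \<Longrightarrow> hU i \<in> car"
  using gens_closed by (auto simp: gens_def)

lemma rel_holds: "(p, q) \<in> rels m n \<Longrightarrow> leval L h p = leval L h q"
  using rels_hold by blast

lemma br_hT_hT: "i \<in> {1..n} \<Longrightarrow> j \<in> {1..n} \<Longrightarrow> br (hT i) (hT j) = zero"
  using rel_holds[of "LBr (LGen (GT i)) (LGen (GT j))" LZero] by (auto simp: rels_def)

lemma br_hT_hU: "i \<in> {1..n} \<Longrightarrow> j \<in> {1..n} \<Longrightarrow> br (hT i) (hU j) = zero"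
  using rel_holds[of "LBr (LGen (GT i)) (LGen (GU j))" LZero] by (auto simp: rels_def)

lemma br_hU_hU: "i \<in> {1..n} \<Longrightarrow> j \<in> {1..n} \<Longrightarrow> br (hU i) (hU j) = zero"
  using rel_holds[of "LBr (LGen (GU i)) (LGen (GU j))" LZero] by (auto simp: rels_def)

lemma br_hU_hT: "i \<in> {1..n} \<Longrightarrow> j \<in> {1..n} \<Longrightarrow> br (hU i) (hT j) = zero"
  using br_antisym[of "hT j" "hU i"] br_hT_hU[of j i] by simp

lemma br_hA_hU: "k \<in> {1..m} \<Longrightarrow> l \<in> {1..n} \<Longrightarrow> br (hA k) (hU l) = br (br (hA k) (hT l)) (hT l)"
  using rel_holds[of "LBr (LGen (GA k)) (LGen (GU l))" "LBr (LBr (LGen (GA k)) (LGen (GT l))) (LGen (GT l))"]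
  by (auto simp: rels_def)

lemma br_iterated_hT_hA:
  assumes "k \<in> {1..m}" "l \<in> {1..m}" and "sorted_wrt (<) js" "set js \<subseteq> {1..n}"
  shows "br (foldl (\<lambda>x j. br x (hT j)) (hA k) js) (hA l) = zero"
proof -
  have "(LBr (lnormed (LGen (GA k)) (map (\<lambda>j. LGen (GT j)) js)) (LGen (GA l)), LZero) \<in> rels m n"
    using assms unfolding rels_def by blast
  from rel_holds[OF this] show ?thesis
    by (simp add: leval_lnormed foldl_map)
qed

definition adT :: "nat \<Rightarrow> 'b \<Rightarrow> 'b" where
  "adT i x = br x (hT i)"

definition adU :: "nat \<Rightarrow> 'b \<Rightarrow> 'b" where
  "adU i x = br x (hU i)"

lemma adT_closed [simp]: "x \<in> car \<Longrightarrow> i \<in> {1..n} \<Longrightarrow> adT i x \<in> car"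
  by (simp add: adT_def)

lemma funpow_adT_closed [simp]: "x \<in> car \<Longrightarrow> i \<in> {1..n} \<Longrightarrow> (adT i ^^ k) x \<in> car"
  by (induction k) auto

lemma adT_commute: "x \<in> car \<Longrightarrow> i \<in> {1..n} \<Longrightarrow> j \<in> {1..n} \<Longrightarrow> adT i (adT j x) = adT j (adT i x)"
  unfolding adT_def using br_br_derivation[of x "hT j" "hT i"] br_hT_hT[of j i] by simp

lemma adT_funpow_adT_commute:
  "x \<in> car \<Longrightarrow> i \<in> {1..n} \<Longrightarrow> j \<in> {1..n} \<Longrightarrow> adT i ((adT j ^^ k) x) = (adT j ^^ k) (adT i x)"
proof (induction k)
  case (Suc k)
  then show ?case using adT_commute[of "(adT j ^^ k) x" i j] by simp
qed simp

lemma funpow_adT_commute: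
  "x \<in> car \<Longrightarrow> i \<in> {1..n} \<Longrightarrow> j \<in> {1..n} \<Longrightarrow> (adT i ^^ p) ((adT j ^^ k) x) = (adT j ^^ k) ((adT i ^^ p) x)"
  by (induction p) (auto simp: adT_funpow_adT_commute)

lemma adU_adT_commute: "x \<in> car \<Longrightarrow> i \<in> {1..n} \<Longrightarrow> j \<in> {1..n} \<Longrightarrow> adU i (adT j x) = adT j (adU i x)"
  unfolding adT_def adU_def using br_br_derivation[of x "hT j" "hU i"] br_hT_hU[of j i] by simp

lemma adU_funpow_adT_commute:
  "x \<in> car \<Longrightarrow> i \<in> {1..n} \<Longrightarrow> j \<in> {1..n} \<Longrightarrow> adU i ((adT j ^^ k) x) = (adT j ^^ k) (adU i x)"
proof (induction k)
  case (Suc k)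
  then show ?case using adU_adT_commute[of "(adT j ^^ k) x" i j] by simp
qed simp

definition ad_monomial :: "nat list \<Rightarrow> (nat \<Rightarrow>\<^sub>0 nat) \<Rightarrow> 'b \<Rightarrow> 'b" where
  "ad_monomial js mo x = foldl (\<lambda>x j. (adT j ^^ lookup mo j) x) x js"

lemma ad_monomial_Nil [simp]: "ad_monomial [] mo x = x"
  by (simp add: ad_monomial_def)

lemma ad_monomial_Cons [simp]: "ad_monomial (j # js) mo x = ad_monomial js mo ((adT j ^^ lookup mo j) x)"
  by (simp add: ad_monomial_def)

lemma ad_monomial_closed [simp]: "set js \<subseteq> {1..n} \<Longrightarrow> x \<in> car \<Longrightarrow> ad_monomial js mo x \<in> car"
  by (induction js arbitrary: x) auto

lemma adT_ad_monomial:
  "set js \<subseteq> {1..n} \<Longrightarrow> x \<in> car \<Longrightarrow> i \<in> {1..n} \<Longrightarrow> adT i (ad_monomial js mo x) = ad_monomial js mo (adT i x)"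
  by (induction js arbitrary: x) (auto simp: adT_funpow_adT_commute)

lemma adU_ad_monomial:
  "set js \<subseteq> {1..n} \<Longrightarrow> x \<in> car \<Longrightarrow> i \<in> {1..n} \<Longrightarrow> adU i (ad_monomial js mo x) = ad_monomial js mo (adU i x)"
  by (induction js arbitrary: x) (auto simp: adU_funpow_adT_commute)

lemma ad_monomial_cong:
  "(\<And>j. j \<in> set js \<Longrightarrow> lookup mo j = lookup mo' j) \<Longrightarrow> ad_monomial js mo x = ad_monomial js mo' x"
  by (induction js arbitrary: x) auto

lemma ad_monomial_zero [simp]: "ad_monomial js 0 x = x"
  by (induction js arbitrary: x) auto

lemma ad_monomial_add_single:
  assumes "set js \<subseteq> {1..n}" "distinct js" "i \<in> set js" "x \<in> car"
  shows "ad_monomial js (mo + single i p) x = ad_monomial js mo ((adT i ^^ p) x)"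
  using assms
proof (induction js arbitrary: x)
  case (Cons j js)
  show ?case
  proof (cases "j = i")
    case True
    have "ad_monomial js (mo + single i p) y = ad_monomial js mo y" for y
      using Cons.prems True by (intro ad_monomial_cong) (auto simp: lookup_add lookup_single when_def)
    then show ?thesis using True by (simp add: lookup_add funpow_add)
  next
    case False
    have ij: "i \<in> {1..n}" "j \<in> {1..n}"
      using Cons.prems by auto
    have "ad_monomial (j # js) (mo + single i p) x
        = ad_monomial js (mo + single i p) ((adT j ^^ lookup mo j) x)"
      using False by (simp add: lookup_add lookup_single)
    also have "\<dots> = ad_monomial js mo ((adT i ^^ p) ((adT j ^^ lookup mo j) x))"
      using Cons False by auto
    also have "\<dots> = ad_monomial (j # js) mo ((adT i ^^ p) x)"
      using Cons.prems(4) ij funpow_adT_commute[of x i j p "lookup mo j"] by simp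
    finally show ?thesis .
  qed
qed simp

lemma ad_monomial_squarefree:
  "(\<And>j. j \<in> set js \<Longrightarrow> lookup mo j \<le> 1) \<Longrightarrow>
    ad_monomial js mo x = foldl (\<lambda>x j. adT j x) x (filter (\<lambda>j. lookup mo j \<noteq> 0) js)"
proof (induction js arbitrary: x)
  case (Cons j js)
  have "lookup mo j = 0 \<or> lookup mo j = 1" using Cons.prems by fastforce
  then show ?case using Cons by auto
qed simp

text \<open>a_mono k \<alpha> is the image of a_k t^\<alpha>, the iterated bracket of A_k with \<alpha>_j copies of each T_j.\<close>
definition a_mono :: "nat \<Rightarrow> (nat \<Rightarrow>\<^sub>0 nat) \<Rightarrow> 'b" where
  "a_mono k mo = ad_monomial [1..<Suc n] mo (hA k)"

lemma a_mono_closed [simp]: "k \<in> {1..m} \<Longrightarrow> a_mono k mo \<in> car"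
  unfolding a_mono_def by (rule ad_monomial_closed) auto

lemma a_mono_zero: "a_mono k 0 = hA k"
  by (simp add: a_mono_def)

lemma a_mono_cong: "(\<And>j. j \<in> {1..n} \<Longrightarrow> lookup mo j = lookup mo' j) \<Longrightarrow> a_mono k mo = a_mono k mo'"
  unfolding a_mono_def by (rule ad_monomial_cong) auto

lemma br_a_mono_hT:
  assumes "k \<in> {1..m}" "i \<in> {1..n}"
  shows "br (a_mono k mo) (hT i) = a_mono k (mo + single i 1)"
proof -
  have "br (a_mono k mo) (hT i) = ad_monomial [1..<Suc n] mo (adT i (hA k))"
    unfolding a_mono_def adT_def[symmetric] using assms by (intro adT_ad_monomial) auto
  also have "\<dots> = a_mono k (mo + single i 1)"
    unfolding a_mono_def using assms by (subst ad_monomial_add_single) auto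
  finally show ?thesis .
qed

lemma br_a_mono_hU:
  assumes "k \<in> {1..m}" "i \<in> {1..n}"
  shows "br (a_mono k mo) (hU i) = a_mono k (mo + single i 2)"
proof -
  have "br (a_mono k mo) (hU i) = ad_monomial [1..<Suc n] mo (adU i (hA k))"
    unfolding a_mono_def adU_def[symmetric] using assms by (intro adU_ad_monomial) auto
  also have "adU i (hA k) = (adT i ^^ 2) (hA k)"
    using br_hA_hU[OF assms] by (simp add: adU_def adT_def numeral_2_eq_2)
  also have "ad_monomial [1..<Suc n] mo ((adT i ^^ 2) (hA k)) = a_mono k (mo + single i 2)"
    unfolding a_mono_def using assms by (subst ad_monomial_add_single) auto
  finally show ?thesis .
qed

definition a_monos_commute :: "(nat \<Rightarrow>\<^sub>0 nat) \<Rightarrow> (nat \<Rightarrow>\<^sub>0 nat) \<Rightarrow> bool" where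
  "a_monos_commute a b \<longleftrightarrow> (\<forall>k\<in>{1..m}. \<forall>l\<in>{1..m}. br (a_mono k a) (a_mono l b) = zero)"

lemma a_monos_commute_swap: "a_monos_commute a b \<Longrightarrow> a_monos_commute b a"
  unfolding a_monos_commute_def by (metis a_mono_closed br_antisym smult_zero)

lemma br_a_mono_shift:
  assumes "a_monos_commute a b" "k \<in> {1..m}" "l \<in> {1..m}" and "g \<in> car"
    and shift: "\<And>k mo. k \<in> {1..m} \<Longrightarrow> br (a_mono k mo) g = a_mono k (mo + e)"
  shows "br (a_mono k (a + e)) (a_mono l b) = (-1) \<star> br (a_mono k a) (a_mono l (b + e))"
proof -
  have "zero = br (br (a_mono k a) (a_mono l b)) g"
    using assms(1-4) by (simp add: a_monos_commute_def)
  also have "\<dots> = br (a_mono k (a + e)) (a_mono l b) \<boxplus> br (a_mono k a) (a_mono l (b + e))"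
    using assms(2-4) by (simp add: br_br_derivation shift)
  finally show ?thesis
    using assms(2,3) by (simp add: eq_minus_if_add_eq_zero)
qed

lemma a_monos_commute_add_var_right:
  assumes i: "i \<in> {1..n}"
    and "a_monos_commute a b" and "a_monos_commute (a + single i 1) b"
  shows "a_monos_commute a (b + single i 1)"
  unfolding a_monos_commute_def
proof (intro ballI)
  fix k l assume k: "k \<in> {1..m}" and l: "l \<in> {1..m}"
  have "(-1) \<star> br (a_mono k a) (a_mono l (b + single i 1)) = zero"
    using br_a_mono_shift[OF assms(2) k l hT_closed[OF i] br_a_mono_hT[OF _ i]] assms(3) k l
    by (simp add: a_monos_commute_def)
  then show "br (a_mono k a) (a_mono l (b + single i 1)) = zero"
    using k l by (simp add: eq_zero_if_minus_eq_zero)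
qed

text \<open>Moving t_i twice, or u_i once, across the bracket X gives X = -X.\<close>
lemma a_monos_commute_if_square_right:
  assumes IH: "\<And>a' b'. mdeg n a' + mdeg n b' < mdeg n a + mdeg n b \<Longrightarrow> a_monos_commute a' b'"
    and i: "i \<in> {1..n}" and "2 \<le> lookup b i"
  shows "a_monos_commute a b"
  unfolding a_monos_commute_def
proof (intro ballI)
  fix k l assume k: "k \<in> {1..m}" and l: "l \<in> {1..m}"
  let ?e = "single i (1::nat)"
  obtain b' where b: "b = b' + single i 2"
    using \<open>2 \<le> lookup b i\<close> by (rule monomial_split_single)
  have b_eq: "(b' + ?e) + ?e = b" and a_eq: "(a + ?e) + ?e = a + single i 2"
    by (simp_all add: b add.assoc single_add[symmetric] numeral_2_eq_2)
  have "a_monos_commute a (b' + ?e)" "a_monos_commute (a + ?e) b'" "a_monos_commute a b'"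
    using i by (auto intro!: IH simp del: One_nat_def simp add: b mdeg_add_single)
  note shift_T = br_a_mono_shift[OF _ k l hT_closed[OF i] br_a_mono_hT[OF _ i]]
    and shift_U = br_a_mono_shift[OF _ k l hU_closed[OF i] br_a_mono_hU[OF _ i]]
  have "br (a_mono k (a + ?e)) (a_mono l (b' + ?e)) = (-1) \<star> br (a_mono k a) (a_mono l b)"
    using shift_T[OF \<open>a_monos_commute a (b' + ?e)\<close>] unfolding b_eq .
  moreover have "br (a_mono k (a + single i 2)) (a_mono l b') =
      (-1) \<star> br (a_mono k (a + ?e)) (a_mono l (b' + ?e))"
    using shift_T[OF \<open>a_monos_commute (a + ?e) b'\<close>] unfolding a_eq .
  moreover have "br (a_mono k (a + single i 2)) (a_mono l b') = (-1) \<star> br (a_mono k a) (a_mono l b)"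
    using shift_U[OF \<open>a_monos_commute a b'\<close>] unfolding b .
  ultimately have "br (a_mono k a) (a_mono l b) = (-1) \<star> br (a_mono k a) (a_mono l b)"
    using k l by simp
  then show "br (a_mono k a) (a_mono l b) = zero"
    using two_ne_zero k l by (simp add: eq_zero_if_eq_minus)
qed

lemma a_monos_commute_if_square_left:
  assumes IH: "\<And>a' b'. mdeg n a' + mdeg n b' < mdeg n a + mdeg n b \<Longrightarrow> a_monos_commute a' b'"
    and "i \<in> {1..n}" and "2 \<le> lookup a i"
  shows "a_monos_commute a b"
proof (rule a_monos_commute_swap, rule a_monos_commute_if_square_right)
  show "a_monos_commute a' b'" if "mdeg n a' + mdeg n b' < mdeg n b + mdeg n a" for a' b'
    using that IH by (simp add: add.commute)
qed (use assms(2,3) in auto)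

lemma a_monos_commute_if_repeated_var:
  assumes IH: "\<And>a' b'. mdeg n a' + mdeg n b' < mdeg n a + mdeg n b \<Longrightarrow> a_monos_commute a' b'"
    and i: "i \<in> {1..n}" and "2 \<le> lookup a i + lookup b i"
  shows "a_monos_commute a b"
proof -
  consider "2 \<le> lookup a i" | "2 \<le> lookup b i" | "1 \<le> lookup b i" "lookup a i = 1"
    using \<open>2 \<le> lookup a i + lookup b i\<close> by linarith
  then show ?thesis
  proof cases
    case 1
    then show ?thesis using IH i by (rule a_monos_commute_if_square_left[rotated 2])
  next
    case 2
    then show ?thesis using IH i by (rule a_monos_commute_if_square_right[rotated 2])
  next
    case 3
    let ?e = "single i (1::nat)"
    obtain b' where b: "b = b' + ?e"
      using \<open>1 \<le> lookup b i\<close> by (rule monomial_split_single)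
    have ab': "a_monos_commute a b'"
      using i by (auto intro!: IH simp del: One_nat_def simp add: b mdeg_add_single)
    have ab'_shifted: "a_monos_commute (a + ?e) b'"
    proof (rule a_monos_commute_if_square_left[OF _ i])
      show "2 \<le> lookup (a + ?e) i"
        using 3 by (simp add: lookup_add)
      show "a_monos_commute c d" if "mdeg n c + mdeg n d < mdeg n (a + ?e) + mdeg n b'" for c d
        using that i by (intro IH) (simp add: b mdeg_add_single del: One_nat_def)
    qed
    show ?thesis
      unfolding b using i ab' ab'_shifted by (rule a_monos_commute_add_var_right)
  qed
qed

lemma a_monos_commute_if_squarefree_0:
  assumes "\<forall>j\<in>{1..n}. lookup b j = 0" and "\<forall>j\<in>{1..n}. lookup a j \<le> 1"
  shows "a_monos_commute a b"
proof -
  let ?js = "filter (\<lambda>j. lookup a j \<noteq> 0) [1..<Suc n]"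
  have "a_mono l b = hA l" for l
    using assms(1) a_mono_cong[of b 0 l] by (simp add: a_mono_zero)
  moreover have "a_mono k a = foldl (\<lambda>x j. br x (hT j)) (hA k) ?js" for k
    unfolding a_mono_def adT_def[symmetric] using assms(2)
    by (intro ad_monomial_squarefree) auto
  moreover have "sorted_wrt (<) ?js"
    by (intro sorted_wrt_filter sorted_wrt_upt)
  moreover have "set ?js \<subseteq> {1..n}"
    by auto
  ultimately show ?thesis
    unfolding a_monos_commute_def by (simp add: br_iterated_hT_hA)
qed

text \<open>In the squarefree case all factors can be moved to the left, leaving a defining relation.\<close>
lemma a_monos_commute_if_squarefree:
  assumes IH: "\<And>a' b'. mdeg n a' + mdeg n b' < N \<Longrightarrow> a_monos_commute a' b'"
    and "mdeg n a + mdeg n b = N" and "\<forall>i\<in>{1..n}. lookup a i + lookup b i \<le> 1"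
  shows "a_monos_commute a b"
  using assms(2,3)
proof (induction "mdeg n b" arbitrary: a b)
  case 0
  then show ?case
    by (intro a_monos_commute_if_squarefree_0) (auto simp: mdeg_eq_0_iff)
next
  case (Suc d)
  have "mdeg n b \<noteq> 0"
    using Suc.hyps(2) by simp
  then obtain i where i: "i \<in> {1..n}" and "1 \<le> lookup b i"
    by (auto simp: mdeg_eq_0_iff Suc_le_eq)
  let ?e = "single i (1::nat)"
  obtain b' where b: "b = b' + ?e"
    using \<open>1 \<le> lookup b i\<close> by (rule monomial_split_single)
  have deg: "mdeg n b = mdeg n b' + 1"
    using i by (simp add: b mdeg_add_single del: One_nat_def)
  have ab': "a_monos_commute a b'"
    using Suc.prems(1) deg by (intro IH) simp
  have "a_monos_commute (a + ?e) b'"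
  proof (rule Suc.hyps)
    show "d = mdeg n b'" and "mdeg n (a + ?e) + mdeg n b' = N"
      using Suc.hyps(2) Suc.prems(1) deg i by (simp_all add: mdeg_add_single del: One_nat_def)
    show "\<forall>j\<in>{1..n}. lookup (a + ?e) j + lookup b' j \<le> 1"
      using Suc.prems(2) by (simp add: b lookup_add add.commute add.left_commute)
  qed
  then show ?case
    unfolding b using i ab' by (intro a_monos_commute_add_var_right)
qed

lemma a_monos_commute: "a_monos_commute a b"
proof (induction "mdeg n a + mdeg n b" arbitrary: a b rule: less_induct)
  case less
  then have IH: "\<And>a' b'. mdeg n a' + mdeg n b' < mdeg n a + mdeg n b \<Longrightarrow> a_monos_commute a' b'"
    by blast
  show ?case
  proof (cases "\<exists>i\<in>{1..n}. 2 \<le> lookup a i + lookup b i")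
    case True
    then obtain i where "i \<in> {1..n}" "2 \<le> lookup a i + lookup b i"
      by blast
    with IH show ?thesis
      by (rule a_monos_commute_if_repeated_var)
  next
    case False
    then show ?thesis
      by (intro a_monos_commute_if_squarefree[OF IH refl]) auto
  qed
qed

lemma br_a_mono_a_mono: "k \<in> {1..m} \<Longrightarrow> l \<in> {1..m} \<Longrightarrow> br (a_mono k a) (a_mono l b) = zero"
  using a_monos_commute by (simp add: a_monos_commute_def)

definition a_poly :: "nat \<Rightarrow> 'k mpoly \<Rightarrow> 'b" where
  "a_poly k p = lsum (\<lambda>mo. lookup p mo \<star> a_mono k mo) (keys p)"

lemma a_poly_closed [simp]: "k \<in> {1..m} \<Longrightarrow> a_poly k p \<in> car"
  unfolding a_poly_def by (rule lsum_closed) simp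

lemma a_poly_eq_lsum:
  "k \<in> {1..m} \<Longrightarrow> finite S \<Longrightarrow> keys p \<subseteq> S \<Longrightarrow> a_poly k p = lsum (\<lambda>mo. lookup p mo \<star> a_mono k mo) S"
  unfolding a_poly_def by (rule lsum_mono_neutral) (auto simp: in_keys_iff)

lemma a_poly_zero [simp]: "a_poly k 0 = zero"
  by (simp add: a_poly_def)

lemma a_poly_add:
  assumes k: "k \<in> {1..m}"
  shows "a_poly k (p + q) = a_poly k p \<boxplus> a_poly k q"
proof -
  let ?S = "keys p \<union> keys q"
  have "a_poly k (p + q) = lsum (\<lambda>mo. lookup (p + q) mo \<star> a_mono k mo) ?S"
    using k keys_add[of p q] by (intro a_poly_eq_lsum) auto
  also have "\<dots> = lsum (\<lambda>mo. lookup p mo \<star> a_mono k mo \<boxplus> lookup q mo \<star> a_mono k mo) ?S"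
    using k by (intro lsum_cong) (auto simp: lookup_add smult_add_left)
  also have "\<dots> = lsum (\<lambda>mo. lookup p mo \<star> a_mono k mo) ?S \<boxplus> lsum (\<lambda>mo. lookup q mo \<star> a_mono k mo) ?S"
    using k by (intro lsum_add) auto
  also have "\<dots> = a_poly k p \<boxplus> a_poly k q"
    using a_poly_eq_lsum[OF k, of ?S p] a_poly_eq_lsum[OF k, of ?S q] by simp
  finally show ?thesis .
qed

lemma a_poly_single:
  assumes k: "k \<in> {1..m}"
  shows "a_poly k (single mo c) = c \<star> a_mono k mo"
proof -
  have "a_poly k (single mo c) = lsum (\<lambda>x. lookup (single mo c) x \<star> a_mono k x) {mo}"
    using k by (intro a_poly_eq_lsum) auto
  then show ?thesis using lsum_insert[of "{}" mo] k by simp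
qed

lemma a_poly_pconst_mult:
  assumes k: "k \<in> {1..m}"
  shows "a_poly k (pconst c * p) = c \<star> a_poly k p"
proof -
  have "a_poly k (pconst c * p) = lsum (\<lambda>mo. lookup (pconst c * p) mo \<star> a_mono k mo) (keys p)"
    using k keys_pconst_mult by (intro a_poly_eq_lsum) auto
  also have "\<dots> = lsum (\<lambda>mo. c \<star> (lookup p mo \<star> a_mono k mo)) (keys p)"
    using k by (intro lsum_cong) (auto simp: lookup_pconst_mult)
  also have "\<dots> = c \<star> a_poly k p"
    unfolding a_poly_def using k by (intro smult_lsum[symmetric]) auto
  finally show ?thesis .
qed

lemma a_poly_mult_monomial:
  assumes k: "k \<in> {1..m}"
    and shift: "\<And>mo. br (a_mono k mo) g = a_mono k (mo + e)" and "g \<in> car"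
  shows "a_poly k (p * single e 1) = br (a_poly k p) g"
proof (induction p rule: poly_mapping_single_induct)
  case zero
  then show ?case using assms(3) by simp
next
  case (add_single q mo c)
  have "a_poly k ((single mo c + q) * single e 1) = c \<star> a_mono k (mo + e) \<boxplus> a_poly k (q * single e 1)"
    using k by (simp add: distrib_right mult_single a_poly_add a_poly_single)
  also have "\<dots> = br (a_poly k (single mo c + q)) g"
    using add_single.IH k assms(3) by (simp add: shift a_poly_add a_poly_single br_add_left br_smult_left)
  finally show ?case .
qed

lemma a_poly_mult_pvar: "k \<in> {1..m} \<Longrightarrow> i \<in> {1..n} \<Longrightarrow> a_poly k (p * pvar i) = br (a_poly k p) (hT i)"
  unfolding pvar_def by (rule a_poly_mult_monomial) (simp_all add: br_a_mono_hT)

lemma a_poly_mult_pvar_power2: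
  "k \<in> {1..m} \<Longrightarrow> i \<in> {1..n} \<Longrightarrow> a_poly k (p * pvar i ^ 2) = br (a_poly k p) (hU i)"
  unfolding pvar_power2 by (rule a_poly_mult_monomial) (simp_all add: br_a_mono_hU)

lemma br_a_poly_a_poly: "k \<in> {1..m} \<Longrightarrow> l \<in> {1..m} \<Longrightarrow> br (a_poly k p) (a_poly l q) = zero"
  unfolding a_poly_def
  by (simp add: br_lsum_left br_lsum_right br_smult_left br_smult_right br_a_mono_a_mono lsum_zero)

definition B_lift :: "(nat \<Rightarrow> 'k mpoly) \<Rightarrow> 'b" where
  "B_lift b = lsum (\<lambda>k. a_poly k (b k)) {1..m}"

definition T_lift :: "'k mpoly \<Rightarrow> 'b" where
  "T_lift s = lsum (\<lambda>i. lookup s (single i 1) \<star> hT i \<boxplus> lookup s (single i 2) \<star> hU i) {1..n}"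

definition W_lift :: "(nat \<Rightarrow> 'k mpoly) \<times> 'k mpoly \<Rightarrow> 'b" where
  "W_lift x = B_lift (fst x) \<boxplus> T_lift (snd x)"

lemma B_lift_closed [simp]: "B_lift b \<in> car"
  unfolding B_lift_def by (rule lsum_closed) simp

lemma T_lift_closed [simp]: "T_lift s \<in> car"
  unfolding T_lift_def by (rule lsum_closed) simp

lemma B_lift_add: "B_lift (\<lambda>j. b j + b' j) = B_lift b \<boxplus> B_lift b'"
proof -
  have "B_lift (\<lambda>j. b j + b' j) = lsum (\<lambda>k. a_poly k (b k) \<boxplus> a_poly k (b' k)) {1..m}"
    unfolding B_lift_def by (rule lsum_cong) (auto simp: a_poly_add)
  also have "\<dots> = B_lift b \<boxplus> B_lift b'"
    unfolding B_lift_def by (rule lsum_add) auto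
  finally show ?thesis .
qed

lemma B_lift_pconst_mult: "B_lift (\<lambda>j. pconst c * b j) = c \<star> B_lift b"
proof -
  have "B_lift (\<lambda>j. pconst c * b j) = lsum (\<lambda>k. c \<star> a_poly k (b k)) {1..m}"
    unfolding B_lift_def by (rule lsum_cong) (auto simp: a_poly_pconst_mult)
  also have "\<dots> = c \<star> B_lift b"
    unfolding B_lift_def by (rule smult_lsum[symmetric]) auto
  finally show ?thesis .
qed

lemma B_lift_zero [simp]: "B_lift (\<lambda>_. 0) = zero"
  unfolding B_lift_def by (rule lsum_zero) simp

lemma B_lift_sum: "finite I \<Longrightarrow> B_lift (\<lambda>j. \<Sum>i\<in>I. F i j) = lsum (\<lambda>i. B_lift (F i)) I"
proof (induction I rule: finite_induct)
  case (insert x I)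
  then show ?case by (simp add: B_lift_add lsum_insert)
qed simp

lemma B_lift_mult_pvar: "i \<in> {1..n} \<Longrightarrow> B_lift (\<lambda>j. b j * pvar i) = br (B_lift b) (hT i)"
  unfolding B_lift_def by (subst br_lsum_left) (auto intro: lsum_cong simp: a_poly_mult_pvar)

lemma B_lift_mult_pvar_power2: "i \<in> {1..n} \<Longrightarrow> B_lift (\<lambda>j. b j * pvar i ^ 2) = br (B_lift b) (hU i)"
  unfolding B_lift_def by (subst br_lsum_left) (auto intro: lsum_cong simp: a_poly_mult_pvar_power2)

lemma br_B_lift_B_lift: "br (B_lift b) (B_lift b') = zero"
proof -
  have "br (a_poly k (b k)) (B_lift b') = zero" if "k \<in> {1..m}" for k
    unfolding B_lift_def using that
    by (subst br_lsum_right) (auto intro: lsum_zero simp: br_a_poly_a_poly)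
  then show ?thesis
    unfolding B_lift_def[of b] by (subst br_lsum_left) (auto intro: lsum_zero)
qed

lemma T_lift_tplus: "T_lift (tplus n c d) = lsum (\<lambda>i. c i \<star> hT i \<boxplus> d i \<star> hU i) {1..n}"
  unfolding T_lift_def by (rule lsum_cong) (simp_all add: lookup_tplus del: One_nat_def)

lemma br_B_lift_T_lift: "s \<in> Tplus_car n \<Longrightarrow> br (B_lift b) (T_lift s) = B_lift (\<lambda>j. b j * s)"
proof -
  assume "s \<in> Tplus_car n"
  then obtain c d where s: "s = tplus n c d"
    unfolding Tplus_car_iff by blast
  have "(\<lambda>j. b j * s) = (\<lambda>j. \<Sum>i\<in>{1..n}. pconst (c i) * (b j * pvar i) + pconst (d i) * (b j * pvar i ^ 2))"
    unfolding s tplus_def sum_distrib_left by (simp add: algebra_simps)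
  then have "B_lift (\<lambda>j. b j * s) =
      lsum (\<lambda>i. c i \<star> br (B_lift b) (hT i) \<boxplus> d i \<star> br (B_lift b) (hU i)) {1..n}"
    by (simp add: B_lift_sum) (rule lsum_cong,
        auto simp: B_lift_add B_lift_pconst_mult B_lift_mult_pvar B_lift_mult_pvar_power2)
  also have "\<dots> = br (B_lift b) (T_lift s)"
    unfolding s T_lift_tplus
    by (subst br_lsum_right) (auto intro!: lsum_cong simp: br_add_right br_smult_right)
  finally show ?thesis by simp
qed

lemma br_T_lift_T_lift: "br (T_lift s) (T_lift s') = zero"
proof -
  have gens_commute: "br (a \<star> hT i \<boxplus> b \<star> hU i) (c \<star> hT j \<boxplus> d \<star> hU j) = zero"
    if "i \<in> {1..n}" "j \<in> {1..n}" for a b c d i j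
    using that by (simp add: br_add_left br_add_right br_smult_left br_smult_right
        br_hT_hT br_hT_hU br_hU_hT br_hU_hU)
  have "br (a \<star> hT i \<boxplus> b \<star> hU i) (T_lift s') = zero" if "i \<in> {1..n}" for a b i
    unfolding T_lift_def using that
    by (subst br_lsum_right) (auto intro: lsum_zero simp: gens_commute)
  then show ?thesis
    unfolding T_lift_def[of s] by (subst br_lsum_left) (auto intro: lsum_zero)
qed

lemma T_lift_add: "T_lift (s + s') = T_lift s \<boxplus> T_lift s'"
proof -
  have "T_lift (s + s') = lsum (\<lambda>i. (lookup s (single i 1) \<star> hT i \<boxplus> lookup s (single i 2) \<star> hU i)
      \<boxplus> (lookup s' (single i 1) \<star> hT i \<boxplus> lookup s' (single i 2) \<star> hU i)) {1..n}"
    unfolding T_lift_def by (rule lsum_cong) (auto simp: lookup_add smult_add_left add_ac)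
  also have "\<dots> = T_lift s \<boxplus> T_lift s'"
    unfolding T_lift_def by (rule lsum_add) auto
  finally show ?thesis .
qed

lemma T_lift_pconst_mult: "T_lift (pconst c * s) = c \<star> T_lift s"
proof -
  have "T_lift (pconst c * s) =
      lsum (\<lambda>i. c \<star> (lookup s (single i 1) \<star> hT i \<boxplus> lookup s (single i 2) \<star> hU i)) {1..n}"
    unfolding T_lift_def by (rule lsum_cong) (auto simp: lookup_pconst_mult smult_add_right)
  also have "\<dots> = c \<star> T_lift s"
    unfolding T_lift_def by (rule smult_lsum[symmetric]) auto
  finally show ?thesis .
qed

lemma T_lift_zero [simp]: "T_lift 0 = zero"
  unfolding T_lift_def by (rule lsum_zero) simp

lemma T_lift_pvar:
  assumes "i \<in> {1..n}"
  shows "T_lift (pconst a * pvar i + pconst b * pvar i ^ 2) = a \<star> hT i \<boxplus> b \<star> hU i"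
  unfolding T_lift_def lookup_pconst_mult_pvar using assms
  by (subst lsum_eq_single[of _ i]) auto

lemma lie_hom_W_lift: "lie_hom (Wplus m n) L W_lift"
  unfolding lie_hom_def
proof (intro conjI ballI allI)
  fix x y :: "(nat \<Rightarrow> 'k mpoly) \<times> 'k mpoly"
  assume x: "x \<in> lcar (Wplus m n)" and y: "y \<in> lcar (Wplus m n)"
  obtain b1 s1 b2 s2 where xy: "x = (b1, s1)" "y = (b2, s2)"
    by (cases x, cases y)
  show "W_lift (ladd (Wplus m n) x y) = W_lift x \<boxplus> W_lift y"
    by (simp add: xy W_lift_def B_lift_add T_lift_add add_ac)
  have s: "s1 \<in> Tplus_car n" "s2 \<in> Tplus_car n"
    using x y xy by auto
  have "(\<lambda>j. b1 j * s2 - b2 j * s1) = (\<lambda>j. b1 j * s2 + pconst (-1) * (b2 j * s1))"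
    by (simp add: pconst_minus)
  then have "W_lift (lbr (Wplus m n) x y) = B_lift (\<lambda>j. b1 j * s2) \<boxplus> (-1) \<star> B_lift (\<lambda>j. b2 j * s1)"
    by (simp add: xy W_lift_def B_lift_add B_lift_pconst_mult)
  also have "\<dots> = br (B_lift b1) (T_lift s2) \<boxplus> (-1) \<star> br (B_lift b2) (T_lift s1)"
    using s by (simp add: br_B_lift_T_lift)
  also have "\<dots> = br (W_lift x) (W_lift y)"
    by (simp add: xy W_lift_def br_add_left br_add_right br_B_lift_B_lift br_T_lift_T_lift
        br_antisym[of "B_lift b2" "T_lift s1"] add_commute)
  finally show "W_lift (lbr (Wplus m n) x y) = br (W_lift x) (W_lift y)" .
next
  fix c and x :: "(nat \<Rightarrow> 'k mpoly) \<times> 'k mpoly"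
  show "W_lift (lsmul (Wplus m n) c x) = c \<star> W_lift x"
    by (cases x) (simp add: W_lift_def B_lift_pconst_mult T_lift_pconst_mult smult_add_right)
qed (simp add: W_lift_def)

lemma W_lift_W_gen: "x \<in> gens m n \<Longrightarrow> W_lift (W_gen x) = h x"
proof (induction x)
  case (GA k)
  then have k: "k \<in> {1..m}" by (auto simp: gens_def)
  have "B_lift (\<lambda>j. if j = k then 1 else 0) = a_poly k (single 0 1)"
    unfolding B_lift_def using k by (subst lsum_eq_single[of _ k]) auto
  then show ?case
    using k a_poly_single[OF k, of 0 1] by (simp add: W_lift_def W_gen_def a_mono_zero)
next
  case (GT i)
  then have "i \<in> {1..n}" by (auto simp: gens_def)
  then show ?case
    using T_lift_pvar[of i 1 0] by (simp add: W_lift_def W_gen_def)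
next
  case (GU i)
  then have "i \<in> {1..n}" by (auto simp: gens_def)
  then show ?case
    using T_lift_pvar[of i 0 1] by (simp add: W_lift_def W_gen_def)
qed

end

lemma two_ne_zero_if_CHAR_ne_2:
  assumes "CHAR('k::field) \<noteq> 2"
  shows "(2::'k) \<noteq> 0"
proof
  assume "(2::'k) = 0"
  then have "CHAR('k) dvd 2"
    using of_nat_eq_0_iff_char_dvd[where 'a = 'k, of 2] by simp
  then have "CHAR('k) \<noteq> 0" and "CHAR('k) \<le> 2"
    by (auto dest: dvd_imp_le intro!: gr0I)
  then show False
    using assms CHAR_not_1'[where 'a = 'k] by linarith
qed

theorem proposition2:
  fixes m n :: nat
  assumes "CHAR('k::field) \<noteq> 2"
  shows "lie_presentation (Wplus m n :: ('k, (nat \<Rightarrow> 'k mpoly) \<times> 'k mpoly) lie_alg)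
           (gens m n) W_gen (rels m n) TYPE('b)"
  unfolding lie_presentation_def
proof (intro conjI allI impI)
  fix L :: "('k, 'b) lie_alg" and h
  assume "is_lie_alg L \<and> h ` gens m n \<subseteq> lcar L \<and> (\<forall>(p, q)\<in>rels m n. leval L h p = leval L h q)"
  then interpret rels_model L m n h
    using two_ne_zero_if_CHAR_ne_2[OF assms]
    by (intro rels_model.intro lie_algebraI) (auto simp: rels_model_axioms_def)
  show "\<exists>f. lie_hom (Wplus m n) L f \<and> (\<forall>x\<in>gens m n. f (W_gen x) = h x)"
    using lie_hom_W_lift W_lift_W_gen by blast
qed (rule is_lie_alg_Wplus, use W_gen_in_Wplus in blast, rule Wplus_satisfies_rels, rule lie_span_W_gen)

end
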